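(* Let $(X,\mathcal{A})$ be a measurable space, $f,g\in\mathcal{F}_{[0,1]}^{(X,\mathcal{A})}$ comonotone, $\star:[0,1]^2\to[0,1]$ continuous and non-decreasing in both arguments, $S$ a t-semiconorm, and $\alpha,\beta,\gamma,\lambda,\upsilon,\tau\in(0,\infty)$ with $\gamma\tau\le1$ and $\beta\upsilon\le1$. If for all $a,b,c\in[0,1]$ \[ \big(S((a\star b)^{\alpha},c)\big)^{\lambda}\ \le\ \big[\big(S(a^{\beta},c)\big)^{\upsilon}\star b\big]\wedge\big[a\star\big(S(b^{\gamma},c)\big)^{\tau}\big], \] then for every monotone measure $m$ on $(X,\mathcal{A})$ with $m(X)=1$, \[ \big[\mathbf{I}_S(m,(f\star g)^{\alpha})\big]^{\lambda}\ \le\ \big[\mathbf{I}_S(m,f^{\beta})\big]^{\upsilon}\star\big[\mathbf{I}_S(m,g^{\gamma})\big]^{\tau}. \]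
   Context: A monotone measure on $(X,\mathcal{A})$ is $m:\mathcal{A}\to[0,\infty]$ with $m(\emptyset)=0$, $m(X)>0$, $m(A)\le m(B)$ for $A\subseteq B$. $\mathcal{F}_{[0,1]}^{(X,\mathcal{A})}$ is the set of $\mathcal{A}$-measurable $f:X\to[0,1]$. A t-semiconorm is a map $S:[0,1]^2\to[0,1]$, non-decreasing in both components, with neutral element $0$ (hence $S(a,b)\ge\max(a,b)$). The semiconormed integral is $\mathbf{I}_S(m,f)=\inf\{S(t,m(\{f>t\})) : t\in(0,1]\}$. $f,g$ are comonotone if $(f(x)-f(y))(g(x)-g(y))\ge0$ for all $x,y$. Operations on functions are pointwise. *)

theory Defs
  imports "HOL-Analysis.Analysis"
begin

definition monotone_measure :: "'a measure \<Rightarrow> ('a set \<Rightarrow> ennreal) \<Rightarrow> bool" where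
  "monotone_measure M m \<longleftrightarrow>
     m {} = 0 \<and> m (space M) > 0 \<and>
     (\<forall>A\<in>sets M. \<forall>B\<in>sets M. A \<subseteq> B \<longrightarrow> m A \<le> m B)"

definition F01 :: "'a measure \<Rightarrow> ('a \<Rightarrow> real) set" where
  "F01 M = {f. f \<in> borel_measurable M \<and> (\<forall>x\<in>space M. 0 \<le> f x \<and> f x \<le> 1)}"

definition t_semiconorm :: "(real \<Rightarrow> real \<Rightarrow> real) \<Rightarrow> bool" where
  "t_semiconorm S \<longleftrightarrow>
     (\<forall>a\<in>{0..1}. \<forall>b\<in>{0..1}. S a b \<in> {0..1}) \<and>
     (\<forall>a\<in>{0..1}. \<forall>a'\<in>{0..1}. \<forall>b\<in>{0..1}. \<forall>b'\<in>{0..1}.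
        a \<le> a' \<longrightarrow> b \<le> b' \<longrightarrow> S a b \<le> S a' b') \<and>
     (\<forall>a\<in>{0..1}. S a 0 = a \<and> S 0 a = a)"

definition comonotone :: "'a measure \<Rightarrow> ('a \<Rightarrow> real) \<Rightarrow> ('a \<Rightarrow> real) \<Rightarrow> bool" where
  "comonotone M f g \<longleftrightarrow>
     (\<forall>x\<in>space M. \<forall>y\<in>space M. (f x - f y) * (g x - g y) \<ge> 0)"

text \<open>Semiconormed integral. The measure value m{f>t} is passed to S as a real
  number; this is exact whenever m is finite (in particular when m(X)=1).\<close>
definition semiconormed_integral ::
  "'a measure \<Rightarrow> (real \<Rightarrow> real \<Rightarrow> real) \<Rightarrow> ('a set \<Rightarrow> ennreal) \<Rightarrow> ('a \<Rightarrow> real) \<Rightarrow> real" where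
  "semiconormed_integral M S m f =
     (INF t\<in>{0<..1}. S t (enn2real (m {x\<in>space M. f x > t})))"

end

theory Submission
  imports Defs
begin

text \<open>
  Fix levels \<open>a, b \<in> (0,1]\<close>. Comonotonicity makes the superlevel sets \<open>{f > a}\<close> and
  \<open>{g > b}\<close> nested, and monotonicity of \<open>\<star>\<close> puts the superlevel set of \<open>(f \<star> g)\<^sup>\<alpha>\<close> at height
  \<open>(a \<star> b)\<^sup>\<alpha>\<close> into their union, i.e. into the larger of the two, say \<open>E\<close>. Evaluating the
  integral at that height and applying the hypothesis with \<open>c = m E\<close> bounds the left-hand side
  by \<open>S(a\<^sup>\<beta>, m{f > a})\<^sup>\<upsilon> \<star> S(b\<^sup>\<gamma>, m{g > b})\<^sup>\<tau>\<close>; the conditions \<open>\<beta>\<upsilon> \<le> 1\<close> and \<open>\<gamma>\<tau> \<le> 1\<close> give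
  \<open>a \<le> S(a\<^sup>\<beta>, c)\<^sup>\<upsilon>\<close> and \<open>b \<le> S(b\<^sup>\<gamma>, c)\<^sup>\<tau>\<close> for the argument left untouched by the hypothesis.
  Writing the integrals of \<open>f\<^sup>\<beta>\<close> and \<open>g\<^sup>\<gamma>\<close> as infima over \<open>a\<close> and \<open>b\<close> (substituting
  \<open>t = a\<^sup>\<beta>\<close>, \<open>t = b\<^sup>\<gamma>\<close>), the bound passes to the infima by continuity of \<open>\<star>\<close>.
\<close>

lemma borel_measurable_continuous_on_comp:
  fixes F :: "'b::topological_space \<Rightarrow> 'c::topological_space"
  assumes F: "continuous_on K F" and u: "u \<in> borel_measurable M"
    and range: "\<And>x. x \<in> space M \<Longrightarrow> u x \<in> K"
  shows "(\<lambda>x. F (u x)) \<in> borel_measurable M"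
proof -
  have "u \<in> measurable M (restrict_space borel K)"
    using range by (intro measurable_restrict_space2 u) auto
  from measurable_comp[OF this borel_measurable_continuous_on_restrict[OF F]]
  show ?thesis by (simp add: comp_def)
qed

lemma le_continuous_on_at_INF:
  fixes F :: "real \<times> real \<Rightarrow> real"
  assumes F: "continuous_on K F" and K: "closed K"
    and ne: "A \<noteq> {}" "B \<noteq> {}" and bdd: "bdd_below (u ` A)" "bdd_below (v ` B)"
    and sub: "u ` A \<times> v ` B \<subseteq> K"
    and le: "\<And>a b. a \<in> A \<Longrightarrow> b \<in> B \<Longrightarrow> L \<le> F (u a, v b)"
  shows "L \<le> F (INF a\<in>A. u a, INF b\<in>B. v b)"
proof -
  let ?C = "{z \<in> K. L \<le> F z}"
  have "closure (u ` A \<times> v ` B) \<subseteq> ?C"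
  proof (rule closure_minimal)
    show "u ` A \<times> v ` B \<subseteq> ?C" using sub le by auto
    show "closed ?C" by (rule continuous_on_closed_Collect_le[OF continuous_on_const F K])
  qed
  moreover have "(INF a\<in>A. u a, INF b\<in>B. v b) \<in> closure (u ` A \<times> v ` B)"
    unfolding closure_Times using closure_contains_Inf ne bdd by auto
  ultimately show ?thesis by auto
qed

lemma t_semiconorm_range:
  "t_semiconorm S \<Longrightarrow> a \<in> {0..1} \<Longrightarrow> c \<in> {0..1} \<Longrightarrow> S a c \<in> {0..1}"
  unfolding t_semiconorm_def by blast

lemma t_semiconorm_mono:
  "t_semiconorm S \<Longrightarrow> a \<in> {0..1} \<Longrightarrow> a' \<in> {0..1} \<Longrightarrow> c \<in> {0..1} \<Longrightarrow> c' \<in> {0..1} \<Longrightarrow>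
    a \<le> a' \<Longrightarrow> c \<le> c' \<Longrightarrow> S a c \<le> S a' c'"
  unfolding t_semiconorm_def by blast

lemma t_semiconorm_ge_left:
  assumes S: "t_semiconorm S" and "a \<in> {0..1}" "c \<in> {0..1}"
  shows "a \<le> S a c"
proof -
  have "S a 0 \<le> S a c" using assms by (intro t_semiconorm_mono[OF S]) auto
  then show ?thesis using S \<open>a \<in> {0..1}\<close> unfolding t_semiconorm_def by auto
qed

lemma t_semiconorm_ge_right:
  assumes S: "t_semiconorm S" and "a \<in> {0..1}" "c \<in> {0..1}"
  shows "c \<le> S a c"
proof -
  have "S 0 c \<le> S a c" using assms by (intro t_semiconorm_mono[OF S]) auto
  then show ?thesis using S \<open>c \<in> {0..1}\<close> unfolding t_semiconorm_def by auto
qed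

lemma powr_in_unit_interval: "(x::real) \<in> {0..1} \<Longrightarrow> 0 < e \<Longrightarrow> x powr e \<in> {0..1}"
  by (auto intro: powr_le1)

lemma powr_less_powr_iff:
  "(x::real) \<ge> 0 \<Longrightarrow> y \<ge> 0 \<Longrightarrow> 0 < e \<Longrightarrow> x powr e < y powr e \<longleftrightarrow> x < y"
  by (meson linorder_not_less powr_less_mono2 powr_mono2 less_imp_le)

lemma le_powr_semiconorm_powr:
  assumes S: "t_semiconorm S" and b: "b \<in> {0..1}" and c: "c \<in> {0..1}"
    and "0 < \<gamma>" "0 < \<tau>" "\<gamma> * \<tau> \<le> 1"
  shows "b \<le> (S (b powr \<gamma>) c) powr \<tau>"
proof -
  have "b = b powr 1" using b by simp
  also have "\<dots> \<le> b powr (\<gamma> * \<tau>)" using b assms by (intro powr_mono') auto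
  also have "\<dots> = (b powr \<gamma>) powr \<tau>" by (simp add: powr_powr)
  also have "\<dots> \<le> (S (b powr \<gamma>) c) powr \<tau>"
  proof (rule powr_mono2)
    show "b powr \<gamma> \<le> S (b powr \<gamma>) c"
      using powr_in_unit_interval[OF b \<open>0 < \<gamma>\<close>] c by (rule t_semiconorm_ge_left[OF S])
  qed (use \<open>0 < \<tau>\<close> in auto)
  finally show ?thesis .
qed

lemma comonotone_superlevel_sets_nested:
  assumes "comonotone M f g"
  shows "{x\<in>space M. f x > a} \<subseteq> {x\<in>space M. g x > b} \<or> {x\<in>space M. g x > b} \<subseteq> {x\<in>space M. f x > a}"
proof (rule ccontr)
  assume "\<not> ?thesis"
  then obtain x y where x: "x \<in> space M" "f x > a" "\<not> g x > b" and y: "y \<in> space M" "g y > b" "\<not> f y > a"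
    by blast
  then have "(f x - f y) * (g x - g y) < 0" by (intro mult_pos_neg) auto
  with assms x y show False unfolding comonotone_def by force
qed

lemma semiconormed_integral_powr:
  assumes "0 < \<beta>" and nonneg: "\<And>x. x \<in> space M \<Longrightarrow> 0 \<le> f x"
  shows "semiconormed_integral M S m (\<lambda>x. f x powr \<beta>)
    = (INF a\<in>{0<..1}. S (a powr \<beta>) (enn2real (m {x\<in>space M. f x > a})))"
proof -
  have image: "(\<lambda>a. a powr \<beta>) ` {0<..1} = {0<..1::real}"
  proof
    show "(\<lambda>a. a powr \<beta>) ` {0<..1} \<subseteq> {0<..1::real}"
      using \<open>0 < \<beta>\<close> by (auto intro!: powr_le1)
    show "{0<..1} \<subseteq> (\<lambda>a. a powr \<beta>) ` {0<..1::real}"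
    proof
      fix t :: real assume t: "t \<in> {0<..1}"
      then have "t = (t powr (1/\<beta>)) powr \<beta>" "t powr (1/\<beta>) \<in> {0<..1}"
        using \<open>0 < \<beta>\<close> by (auto simp: powr_powr intro: powr_le1)
      then show "t \<in> (\<lambda>a. a powr \<beta>) ` {0<..1}" by blast
    qed
  qed
  have level: "{x\<in>space M. f x powr \<beta> > a powr \<beta>} = {x\<in>space M. f x > a}" if "a \<in> {0<..1}" for a
    using that nonneg \<open>0 < \<beta>\<close> by (auto simp: powr_less_powr_iff)
  have "semiconormed_integral M S m (\<lambda>x. f x powr \<beta>)
      = (INF t\<in>(\<lambda>a. a powr \<beta>) ` {0<..1}. S t (enn2real (m {x\<in>space M. f x powr \<beta> > t})))"
    by (simp only: semiconormed_integral_def image)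
  also have "\<dots> = (INF a\<in>{0<..1}. S (a powr \<beta>) (enn2real (m {x\<in>space M. f x > a})))"
    unfolding image_image using level by (intro INF_cong) auto
  finally show ?thesis .
qed

locale normalized_monotone_measure =
  fixes M :: "'a measure" and m :: "'a set \<Rightarrow> ennreal"
  assumes m: "monotone_measure M m" and m1: "m (space M) = 1"
begin

lemma enn2real_measure_mono:
  assumes "E \<in> sets M" "F \<in> sets M" "E \<subseteq> F"
  shows "enn2real (m E) \<le> enn2real (m F)"
proof (rule enn2real_mono)
  show "m E \<le> m F" using m assms unfolding monotone_measure_def by blast
  have "m F \<le> m (space M)"
    using m \<open>F \<in> sets M\<close> sets.sets_into_space unfolding monotone_measure_def by blast
  then show "m F < top" using m1 by (simp add: order.strict_trans1)
qed

lemma enn2real_measure_unit_interval: "E \<in> sets M \<Longrightarrow> enn2real (m E) \<in> {0..1}"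
  using enn2real_measure_mono[of E "space M"] sets.sets_into_space m1 by auto

lemma semiconorm_measure_unit_interval:
  "t_semiconorm S \<Longrightarrow> t \<in> {0..1} \<Longrightarrow> E \<in> sets M \<Longrightarrow> S t (enn2real (m E)) \<in> {0..1}"
  using t_semiconorm_range enn2real_measure_unit_interval by blast

lemma semiconormed_integral_nonneg:
  assumes S: "t_semiconorm S" and "h \<in> borel_measurable M"
  shows "0 \<le> semiconormed_integral M S m h"
  unfolding semiconormed_integral_def
  using semiconorm_measure_unit_interval[OF S] assms by (intro cINF_greatest) auto

lemma semiconormed_integral_le_superlevel:
  assumes S: "t_semiconorm S" and h: "h \<in> borel_measurable M" and t: "t \<in> {0<..1}"
    and E: "E \<in> sets M" and sub: "{x\<in>space M. h x > t} \<subseteq> E"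
  shows "semiconormed_integral M S m h \<le> S t (enn2real (m E))"
proof -
  let ?level = "\<lambda>t. {x\<in>space M. h x > t}"
  have level: "?level t \<in> sets M" for t using h by measurable
  have "bdd_below ((\<lambda>t. S t (enn2real (m (?level t)))) ` {0<..1})"
    using semiconorm_measure_unit_interval[OF S _ level] by (intro bdd_belowI[of _ 0]) auto
  then have "semiconormed_integral M S m h \<le> S t (enn2real (m (?level t)))"
    unfolding semiconormed_integral_def using t by (rule cINF_lower)
  also have "\<dots> \<le> S t (enn2real (m E))"
    using t level enn2real_measure_unit_interval[OF level] enn2real_measure_unit_interval[OF E]
    by (intro t_semiconorm_mono[OF S] enn2real_measure_mono[OF level E sub]) auto
  finally show ?thesis .
qed

end

locale semiconormed_chebyshev = normalized_monotone_measure M m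
  for M :: "'a measure" and m :: "'a set \<Rightarrow> ennreal" +
  fixes f g :: "'a \<Rightarrow> real"
    and star :: "real \<Rightarrow> real \<Rightarrow> real"
    and S :: "real \<Rightarrow> real \<Rightarrow> real"
    and \<alpha> \<beta> \<gamma> lam \<upsilon> \<tau> :: real
  assumes f: "f \<in> F01 M" and g: "g \<in> F01 M"
    and comon: "comonotone M f g"
    and star_range: "\<forall>a\<in>{0..1}. \<forall>b\<in>{0..1}. star a b \<in> {0..1}"
    and star_cont: "continuous_on ({0..1} \<times> {0..1}) (\<lambda>(a, b). star a b)"
    and star_mono: "\<forall>a\<in>{0..1}. \<forall>a'\<in>{0..1}. \<forall>b\<in>{0..1}. \<forall>b'\<in>{0..1}.
                      a \<le> a' \<longrightarrow> b \<le> b' \<longrightarrow> star a b \<le> star a' b'"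
    and S: "t_semiconorm S"
    and pos: "\<alpha> > 0" "\<beta> > 0" "\<gamma> > 0" "lam > 0" "\<upsilon> > 0" "\<tau> > 0"
    and gt: "\<gamma> * \<tau> \<le> 1" and bu: "\<beta> * \<upsilon> \<le> 1"
    and ineq: "\<forall>a\<in>{0..1}. \<forall>b\<in>{0..1}. \<forall>c\<in>{0..1}.
       (S ((star a b) powr \<alpha>) c) powr lam
         \<le> min (star ((S (a powr \<beta>) c) powr \<upsilon>) b) (star a ((S (b powr \<gamma>) c) powr \<tau>))"
begin

lemma f_borel [measurable]: "f \<in> borel_measurable M"
  and g_borel [measurable]: "g \<in> borel_measurable M"
  and f_unit_interval: "x \<in> space M \<Longrightarrow> f x \<in> {0..1}"
  and g_unit_interval: "x \<in> space M \<Longrightarrow> g x \<in> {0..1}"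
  using f g unfolding F01_def by auto

lemma star_unit_interval: "a \<in> {0..1} \<Longrightarrow> b \<in> {0..1} \<Longrightarrow> star a b \<in> {0..1}"
  using star_range by blast

lemma star_le_star:
  "a \<in> {0..1} \<Longrightarrow> a' \<in> {0..1} \<Longrightarrow> b \<in> {0..1} \<Longrightarrow> b' \<in> {0..1} \<Longrightarrow>
    a \<le> a' \<Longrightarrow> b \<le> b' \<Longrightarrow> star a b \<le> star a' b'"
  using star_mono by blast

lemma semiconorm_ineq_left:
  "a \<in> {0..1} \<Longrightarrow> b \<in> {0..1} \<Longrightarrow> c \<in> {0..1} \<Longrightarrow>
    (S ((star a b) powr \<alpha>) c) powr lam \<le> star ((S (a powr \<beta>) c) powr \<upsilon>) b"
  using ineq by simp

lemma semiconorm_ineq_right: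
  "a \<in> {0..1} \<Longrightarrow> b \<in> {0..1} \<Longrightarrow> c \<in> {0..1} \<Longrightarrow>
    (S ((star a b) powr \<alpha>) c) powr lam \<le> star a ((S (b powr \<gamma>) c) powr \<tau>)"
  using ineq by simp

lemma star_borel [measurable]: "(\<lambda>x. star (f x) (g x)) \<in> borel_measurable M"
proof -
  have "(\<lambda>x. (\<lambda>(a, b). star a b) (f x, g x)) \<in> borel_measurable M"
    using f_unit_interval g_unit_interval
    by (intro borel_measurable_continuous_on_comp[OF star_cont]) auto
  then show ?thesis by simp
qed

lemma star_pos:
  assumes a: "a \<in> {0<..1}" and b: "b \<in> {0<..1}"
  shows "0 < star a b"
proof -
  define c where "c = b powr (1 / \<tau>)"
  have c: "c \<in> {0<..1}" and "c powr \<tau> = b"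
    using b pos by (auto simp: c_def powr_powr intro!: powr_le1)
  have star00: "star 0 0 powr \<alpha> \<in> {0..1}"
    using powr_in_unit_interval[OF star_unit_interval[of 0 0] pos(1)] by simp
  have "0 < c powr lam" using c by simp
  also have "\<dots> \<le> (S ((star 0 0) powr \<alpha>) c) powr lam"
  proof (rule powr_mono2)
    show "c \<le> S ((star 0 0) powr \<alpha>) c"
      using t_semiconorm_ge_right[OF S star00] c by auto
  qed (use c pos in auto)
  also have "\<dots> \<le> star 0 (c powr \<tau>)"
    using semiconorm_ineq_right[of 0 0 c] c S unfolding t_semiconorm_def by auto
  also have "\<dots> \<le> star a b"
    using \<open>c powr \<tau> = b\<close> a b by (intro star_le_star) auto
  finally show ?thesis .
qed

lemma superlevel_star_powr_subset:
  assumes "a \<in> {0..1}" "b \<in> {0..1}"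
  shows "{x\<in>space M. star (f x) (g x) powr \<alpha> > star a b powr \<alpha>}
    \<subseteq> {x\<in>space M. f x > a} \<union> {x\<in>space M. g x > b}"
proof
  fix x assume x: "x \<in> {x\<in>space M. star (f x) (g x) powr \<alpha> > star a b powr \<alpha>}"
  then have "star a b < star (f x) (g x)"
    using assms f_unit_interval g_unit_interval star_unit_interval pos(1)
    by (auto simp: powr_less_powr_iff)
  then have "\<not> (f x \<le> a \<and> g x \<le> b)"
    using star_le_star[of "f x" a "g x" b] assms f_unit_interval g_unit_interval x by auto
  with x show "x \<in> {x\<in>space M. f x > a} \<union> {x\<in>space M. g x > b}" by auto
qed

lemma semiconormed_integral_star_powr_le_levels:
  assumes a: "a \<in> {0<..1}" and b: "b \<in> {0<..1}"
  shows "(semiconormed_integral M S m (\<lambda>x. star (f x) (g x) powr \<alpha>)) powr lam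
    \<le> star ((S (a powr \<beta>) (enn2real (m {x\<in>space M. f x > a}))) powr \<upsilon>)
           ((S (b powr \<gamma>) (enn2real (m {x\<in>space M. g x > b}))) powr \<tau>)"
proof -
  define A where "A = {x\<in>space M. f x > a}"
  define B where "B = {x\<in>space M. g x > b}"
  have A: "A \<in> sets M" and B: "B \<in> sets M" unfolding A_def B_def by measurable
  have \<mu>A: "enn2real (m A) \<in> {0..1}" and \<mu>B: "enn2real (m B) \<in> {0..1}"
    using enn2real_measure_unit_interval A B by blast+
  have a01: "a \<in> {0..1}" and b01: "b \<in> {0..1}" using a b by auto
  let ?I = "semiconormed_integral M S m (\<lambda>x. star (f x) (g x) powr \<alpha>)"
  let ?u = "(S (a powr \<beta>) (enn2real (m A))) powr \<upsilon>"
  let ?v = "(S (b powr \<gamma>) (enn2real (m B))) powr \<tau>"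
  have "S (a powr \<beta>) (enn2real (m A)) \<in> {0..1}" "S (b powr \<gamma>) (enn2real (m B)) \<in> {0..1}"
    using powr_in_unit_interval a01 b01 pos \<mu>A \<mu>B t_semiconorm_range[OF S] by blast+
  then have u: "?u \<in> {0..1}" and v: "?v \<in> {0..1}"
    using powr_in_unit_interval pos by blast+
  have "a \<le> ?u" and "b \<le> ?v"
    using le_powr_semiconorm_powr[OF S] a01 b01 \<mu>A \<mu>B pos gt bu by blast+
  define s where "s = star a b powr \<alpha>"
  have s: "s \<in> {0<..1}"
    unfolding s_def using star_pos[OF a b] powr_in_unit_interval[OF star_unit_interval[OF a01 b01] pos(1)]
    by auto
  have I: "0 \<le> ?I" by (intro semiconormed_integral_nonneg[OF S]) measurable
  have "A \<union> B = A \<or> A \<union> B = B"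
    using comonotone_superlevel_sets_nested[OF comon, of a b] unfolding A_def B_def by blast
  then show ?thesis
  proof
    assume "A \<union> B = A"
    then have "?I powr lam \<le> (S s (enn2real (m A))) powr lam"
      using I pos(4) s A superlevel_star_powr_subset[OF a01 b01] unfolding s_def A_def B_def
      by (intro powr_mono2 semiconormed_integral_le_superlevel[OF S]) auto
    also have "\<dots> \<le> star ?u b"
      unfolding s_def using a01 b01 \<mu>A by (rule semiconorm_ineq_left)
    also have "\<dots> \<le> star ?u ?v"
      using u v b01 \<open>b \<le> ?v\<close> by (intro star_le_star) auto
    finally show ?thesis unfolding A_def B_def .
  next
    assume "A \<union> B = B"
    then have "?I powr lam \<le> (S s (enn2real (m B))) powr lam"
      using I pos(4) s B superlevel_star_powr_subset[OF a01 b01] unfolding s_def A_def B_def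
      by (intro powr_mono2 semiconormed_integral_le_superlevel[OF S]) auto
    also have "\<dots> \<le> star a ?v"
      unfolding s_def using a01 b01 \<mu>B by (rule semiconorm_ineq_right)
    also have "\<dots> \<le> star ?u ?v"
      using u v a01 \<open>a \<le> ?u\<close> by (intro star_le_star) auto
    finally show ?thesis unfolding A_def B_def .
  qed
qed

lemma semiconormed_integral_chebyshev:
  "(semiconormed_integral M S m (\<lambda>x. (star (f x) (g x)) powr \<alpha>)) powr lam
    \<le> star ((semiconormed_integral M S m (\<lambda>x. f x powr \<beta>)) powr \<upsilon>)
           ((semiconormed_integral M S m (\<lambda>x. g x powr \<gamma>)) powr \<tau>)"
proof -
  define u where "u a = S (a powr \<beta>) (enn2real (m {x\<in>space M. f x > a}))" for a
  define v where "v b = S (b powr \<gamma>) (enn2real (m {x\<in>space M. g x > b}))" for b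
  have uv: "u a \<in> {0..1}" "v a \<in> {0..1}" if "a \<in> {0<..1}" for a
  proof -
    have "a powr \<beta> \<in> {0..1}" "a powr \<gamma> \<in> {0..1}" using that pos by (auto intro!: powr_le1)
    moreover have "{x\<in>space M. f x > a} \<in> sets M" "{x\<in>space M. g x > a} \<in> sets M" by measurable
    ultimately show "u a \<in> {0..1}" "v a \<in> {0..1}"
      unfolding u_def v_def using semiconorm_measure_unit_interval[OF S] by blast+
  qed
  have F: "continuous_on ({0..1} \<times> {0..1}) (\<lambda>z. (\<lambda>(a, b). star a b) (fst z powr \<upsilon>, snd z powr \<tau>))"
  proof (rule continuous_on_compose2[OF star_cont])
    show "continuous_on ({0..1} \<times> {0..1}) (\<lambda>z::real \<times> real. (fst z powr \<upsilon>, snd z powr \<tau>))"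
      using pos by (intro continuous_intros continuous_on_powr') auto
  qed (use pos in \<open>auto intro!: powr_le1\<close>)
  have "(semiconormed_integral M S m (\<lambda>x. (star (f x) (g x)) powr \<alpha>)) powr lam
      \<le> star ((INF a\<in>{0<..1}. u a) powr \<upsilon>) ((INF b\<in>{0<..1}. v b) powr \<tau>)"
  proof (rule le_continuous_on_at_INF[OF F, simplified])
    show "closed ({0..1::real} \<times> {0..1::real})" by (intro closed_Times) auto
    show "bdd_below (u ` {0<..1})" "bdd_below (v ` {0<..1})"
      using uv by (auto intro!: bdd_belowI[of _ 0])
    show "u ` {0<..1} \<times> v ` {0<..1} \<subseteq> {0..1} \<times> {0..1}" using uv by auto
  qed (auto simp: u_def v_def intro!: semiconormed_integral_star_powr_le_levels)
  then show ?thesis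
    using semiconormed_integral_powr[of \<beta> M f S m] semiconormed_integral_powr[of \<gamma> M g S m]
      f_unit_interval g_unit_interval pos unfolding u_def v_def by simp
qed

end

theorem corollary4p3:
  fixes M :: "'a measure"
    and f g :: "'a \<Rightarrow> real"
    and star :: "real \<Rightarrow> real \<Rightarrow> real"
    and S :: "real \<Rightarrow> real \<Rightarrow> real"
    and \<alpha> \<beta> \<gamma> lam \<upsilon> \<tau> :: real
  assumes f: "f \<in> F01 M" and g: "g \<in> F01 M"
    and comon: "comonotone M f g"
    and star_range: "\<forall>a\<in>{0..1}. \<forall>b\<in>{0..1}. star a b \<in> {0..1}"
    and star_cont: "continuous_on ({0..1} \<times> {0..1}) (\<lambda>(a, b). star a b)"
    and star_mono: "\<forall>a\<in>{0..1}. \<forall>a'\<in>{0..1}. \<forall>b\<in>{0..1}. \<forall>b'\<in>{0..1}.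
                      a \<le> a' \<longrightarrow> b \<le> b' \<longrightarrow> star a b \<le> star a' b'"
    and S: "t_semiconorm S"
    and pos: "\<alpha> > 0" "\<beta> > 0" "\<gamma> > 0" "lam > 0" "\<upsilon> > 0" "\<tau> > 0"
    and gt: "\<gamma> * \<tau> \<le> 1" and bu: "\<beta> * \<upsilon> \<le> 1"
    and ineq: "\<forall>a\<in>{0..1}. \<forall>b\<in>{0..1}. \<forall>c\<in>{0..1}.
       (S ((star a b) powr \<alpha>) c) powr lam
         \<le> min (star ((S (a powr \<beta>) c) powr \<upsilon>) b) (star a ((S (b powr \<gamma>) c) powr \<tau>))"
  shows "\<forall>m. monotone_measure M m \<and> m (space M) = 1 \<longrightarrow>
     (semiconormed_integral M S m (\<lambda>x. (star (f x) (g x)) powr \<alpha>)) powr lam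
       \<le> star ((semiconormed_integral M S m (\<lambda>x. f x powr \<beta>)) powr \<upsilon>)
              ((semiconormed_integral M S m (\<lambda>x. g x powr \<gamma>)) powr \<tau>)"
proof (intro allI impI, goal_cases)
  case (1 m)
  then have m: "normalized_monotone_measure M m" by (simp add: normalized_monotone_measure_def)
  have "semiconormed_chebyshev M m f g star S \<alpha> \<beta> \<gamma> lam \<upsilon> \<tau>"
    by (rule semiconormed_chebyshev.intro[OF m semiconormed_chebyshev_axioms.intro[OF assms]])
  then show ?case by (rule semiconormed_chebyshev.semiconormed_integral_chebyshev)
qed

end
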